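(* Let $A\colon\mathbb{R}_{>0}\to\mathbb{R}_{>0}$ be continuous with $\lim_{x\to\infty}A(x)=0$, and suppose $A$ has a convex differentiable tail, i.e., there is $x_0$ such that $A$ restricted to $(x_0,\infty)$ is convex and differentiable. Let $(a_t)_{t\ge1}$ be a sequence in $\mathbb{R}_{>0}$ satisfying $a_{t+1}=a_t+A(a_t)$ for all $t$, and let $f\colon\mathbb{R}_{>0}\to\mathbb{R}_{>0}$ be a function with $f'(t)=A(f(t))$ for all sufficiently large $t$. Then $\lim_{t\to\infty} f(t)/a_t=1$. *)

theory Defs
  imports "HOL-Analysis.Analysis"
begin

end

(*
  Let tau x be the integral of 1 / A from a fixed point c of the convex tail up to x, the time the
  flow of y' = A y needs to get from c to x.  Along the solution, tau (f t) = t + const exactly.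
  For the recurrence, one step from x to x + A x increases tau by an amount between 1 and
  A x / A (x + A x), and convexity forces A (x + A x) / A x -> 1; by Cesaro, tau (a t) / t -> 1.
  Finally, 1 / A is nondecreasing, hence so is tau x / x, so y / x always lies between 1 and
  tau y / tau x: the asymptotic equality tau (f t) ~ tau (a t) forces f t ~ a t.
*)
theory Submission
  imports Defs
begin

lemma convex_on_chord_le:
  fixes A :: "real \<Rightarrow> real"
  assumes cv: "convex_on S A" and u: "u \<in> S" and w: "w \<in> S" and uv: "u < v" and vw: "v < w"
  shows "(w - u) * A v \<le> (w - v) * A u + (v - u) * A w"
proof -
  define t where "t = (v - u) / (w - u)"
  have t: "0 \<le> t" "t \<le> 1" and tw: "t * (w - u) = v - u"
    using uv vw by (auto simp: t_def field_simps)
  have "(1 - t) *\<^sub>R u + t *\<^sub>R w = u + t * (w - u)"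
    by (simp add: algebra_simps)
  then have "A v \<le> (1 - t) * A u + t * A w"
    using convex_onD[OF cv t u w] tw by simp
  then have "(w - u) * A v \<le> (w - u) * ((1 - t) * A u + t * A w)"
    using uv vw by (intro mult_left_mono) auto
  also have "\<dots> = (w - u) * A u - (t * (w - u)) * A u + (t * (w - u)) * A w"
    by (simp add: algebra_simps)
  also have "\<dots> = (w - v) * A u + (v - u) * A w"
    unfolding tw by (simp add: algebra_simps)
  finally show ?thesis .
qed

lemma convex_on_tendsto_0_antimono:
  fixes A :: "real \<Rightarrow> real"
  assumes cv: "convex_on {x0<..} A" and lim: "(A \<longlongrightarrow> 0) at_top"
    and nonneg: "\<And>x. x > x0 \<Longrightarrow> A x \<ge> 0" and "x0 < x" and "x \<le> y"
  shows "A y \<le> A x"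
proof (rule ccontr)
  assume "\<not> A y \<le> A x"
  then have lt: "A x < A y" and "x < y"
    using \<open>x \<le> y\<close> by (auto simp: order.order_iff_strict)
  have ge: "A y \<le> A z" if "z > y" for z
  proof -
    have "(z - x) * A y \<le> (z - y) * A x + (y - x) * A z"
      using convex_on_chord_le[OF cv, of x z y] \<open>x0 < x\<close> \<open>x < y\<close> that by auto
    also have "\<dots> \<le> (z - y) * A y + (y - x) * A z"
      using lt that by (intro add_right_mono mult_left_mono) auto
    finally have "(y - x) * A y \<le> (y - x) * A z"
      by (simp add: algebra_simps)
    then show ?thesis
      using \<open>x < y\<close> by simp
  qed
  have "A y > 0"
    using nonneg[of x] \<open>x0 < x\<close> lt by simp
  then obtain N where "\<And>z. z \<ge> N \<Longrightarrow> A z < A y"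
    using order_tendstoD(2)[OF lim] by (auto simp: eventually_at_top_linorder)
  then show False
    using ge[of "max N (y + 1)"] by (metis max.cobounded1 max.strict_coboundedI2 less_add_one not_le)
qed

text \<open>Three-point convexity at \<open>x - 1 < x < x + A x\<close> gives \<open>A (x + A x) \<ge> A x * (1 - A (x - 1))\<close>.\<close>
lemma convex_on_step_ratio_tendsto_1:
  fixes A :: "real \<Rightarrow> real"
  assumes cv: "convex_on {x0<..} A" and lim: "(A \<longlongrightarrow> 0) at_top"
    and pos: "\<And>x. x > x0 \<Longrightarrow> A x > 0"
  shows "((\<lambda>x. A (x + A x) / A x) \<longlongrightarrow> 1) at_top"
proof (rule real_tendsto_sandwich)
  have "filterlim (\<lambda>x. x - 1) at_top (at_top :: real filter)"
    unfolding filterlim_at_top eventually_at_top_linorder by (metis le_diff_eq)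
  then have "((\<lambda>x. A (x - 1)) \<longlongrightarrow> 0) at_top"
    by (rule filterlim_compose[OF lim])
  then show "((\<lambda>x. 1 - A (x - 1)) \<longlongrightarrow> 1) at_top"
    using tendsto_diff[OF tendsto_const] by fastforce
  have "1 - A (x - 1) \<le> A (x + A x) / A x \<and> A (x + A x) / A x \<le> 1" if x: "x > x0 + 1" for x
  proof -
    have h: "A x > 0" "A (x + A x) > 0"
      using pos[of x] pos[of "x + A x"] x by auto
    have "(x + A x - (x - 1)) * A x \<le> (x + A x - x) * A (x - 1) + (x - (x - 1)) * A (x + A x)"
      using convex_on_chord_le[OF cv, of "x - 1" "x + A x" x] x h by auto
    then have "A x * (1 + A x - A (x - 1)) \<le> A (x + A x)"
      by (simp add: algebra_simps)
    moreover have "A x * (1 - A (x - 1)) \<le> A x * (1 + A x - A (x - 1))"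
      using h by (intro mult_left_mono) auto
    ultimately have "A x * (1 - A (x - 1)) \<le> A (x + A x)"
      by linarith
    moreover have "A (x + A x) \<le> A x"
      using convex_on_tendsto_0_antimono[OF cv lim, of x "x + A x"] pos x h by fastforce
    ultimately show ?thesis
      using h by (simp add: field_simps)
  qed
  then show "eventually (\<lambda>x. 1 - A (x - 1) \<le> A (x + A x) / A x) at_top"
    and "eventually (\<lambda>x. A (x + A x) / A x \<le> 1) at_top"
    by (auto simp: eventually_at_top_dense intro: exI[of _ "x0 + 1"])
qed (rule tendsto_const)

lemma LIMSEQ_over_n_if_differences_LIMSEQ_0:
  fixes y :: "nat \<Rightarrow> real"
  assumes diff: "(\<lambda>n. y (Suc n) - y n) \<longlonglongrightarrow> 0"
  shows "(\<lambda>n. y n / real n) \<longlonglongrightarrow> 0"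
proof (rule LIMSEQ_I)
  fix e :: real assume "e > 0"
  then obtain N where N: "\<And>k. k \<ge> N \<Longrightarrow> \<bar>y (Suc k) - y k\<bar> < e / 2"
    using LIMSEQ_D[OF diff, of "e / 2"] by auto
  have drift: "\<bar>y n - y N\<bar> \<le> real (n - N) * (e / 2)" if "n \<ge> N" for n
    using that
  proof (induction n rule: dec_induct)
    case (step n)
    have "\<bar>y (Suc n) - y N\<bar> \<le> \<bar>y (Suc n) - y n\<bar> + \<bar>y n - y N\<bar>"
      by linarith
    also have "\<dots> \<le> e / 2 + real (n - N) * (e / 2)"
      using N[OF step.hyps(1)] step.IH by linarith
    finally show ?case
      using step.hyps(1) by (simp add: Suc_diff_le of_nat_diff field_simps)
  qed simp
  obtain M :: nat where M: "2 * \<bar>y N\<bar> / e < real M"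
    using reals_Archimedean2 by blast
  have "norm (y n / real n - 0) < e" if "n \<ge> max (Suc N) M" for n
  proof -
    have "e * real M \<le> e * real n"
      using that \<open>e > 0\<close> by simp
    moreover have "2 * \<bar>y N\<bar> < e * real M"
      using M \<open>e > 0\<close> by (simp add: field_simps)
    ultimately have n: "real n > 0" "2 * \<bar>y N\<bar> < e * real n"
      using that by auto
    have "real (n - N) * (e / 2) \<le> real n * (e / 2)"
      using \<open>e > 0\<close> by (intro mult_right_mono) auto
    then have "\<bar>y n\<bar> \<le> \<bar>y N\<bar> + real n * (e / 2)"
      using drift[of n] that by linarith
    also have "\<dots> < real n * e"
      using n by (simp add: field_simps)
    finally show ?thesis
      using n by (simp add: field_simps)
  qed
  then show "\<exists>no. \<forall>n\<ge>no. norm (y n / real n - 0) < e"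
    by blast
qed

lemma LIMSEQ_over_n_if_differences_LIMSEQ:
  fixes x :: "nat \<Rightarrow> real"
  assumes "(\<lambda>n. x (Suc n) - x n) \<longlonglongrightarrow> L"
  shows "(\<lambda>n. x n / real n) \<longlonglongrightarrow> L"
proof -
  have "(\<lambda>n. (x n - real n * L) / real n) \<longlonglongrightarrow> 0"
  proof (intro LIMSEQ_over_n_if_differences_LIMSEQ_0)
    show "(\<lambda>n. x (Suc n) - real (Suc n) * L - (x n - real n * L)) \<longlonglongrightarrow> 0"
      using LIM_zero[OF assms] by (simp add: algebra_simps)
  qed
  then have "(\<lambda>n. (x n - real n * L) / real n + L) \<longlonglongrightarrow> 0 + L"
    by (intro tendsto_add tendsto_const)
  moreover have "eventually (\<lambda>n. (x n - real n * L) / real n + L = x n / real n) sequentially"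
    by (auto simp: eventually_sequentially field_simps intro: exI[of _ 1])
  ultimately show ?thesis
    by (simp add: tendsto_cong)
qed

locale positive_antimono_rate =
  fixes A :: "real \<Rightarrow> real" and c :: real
  assumes c_pos: "c > 0"
    and cont: "continuous_on {c..} A"
    and pos: "\<And>x. c \<le> x \<Longrightarrow> A x > 0"
    and antimono: "\<And>x y. c \<le> x \<Longrightarrow> x \<le> y \<Longrightarrow> A y \<le> A x"
begin

definition travel_time :: "real \<Rightarrow> real" where
  "travel_time x = integral {c..x} (\<lambda>s. 1 / A s)"

lemma continuous_on_inverse: "continuous_on {c..} (\<lambda>s. 1 / A s)"
  using cont pos by (intro continuous_on_divide continuous_on_const) force+

lemma inverse_mono: "c \<le> x \<Longrightarrow> x \<le> y \<Longrightarrow> 1 / A x \<le> 1 / A y"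
  using pos[of y] antimono[of x y] by (intro frac_le) auto

lemma travel_time_diff_bounds:
  assumes "c \<le> u" and "u \<le> v"
  shows "(v - u) / A u \<le> travel_time v - travel_time u"
    and "travel_time v - travel_time u \<le> (v - u) / A v"
proof -
  have int: "(\<lambda>s. 1 / A s) integrable_on {c..v}" and int_uv: "(\<lambda>s. 1 / A s) integrable_on {u..v}"
    using assms by (auto intro!: integrable_continuous_real continuous_on_subset[OF continuous_on_inverse])
  have diff: "travel_time v - travel_time u = integral {u..v} (\<lambda>s. 1 / A s)"
    using Henstock_Kurzweil_Integration.integral_combine[OF assms int] by (simp add: travel_time_def)
  have "integral {u..v} (\<lambda>_. 1 / A u) \<le> integral {u..v} (\<lambda>s. 1 / A s)"
    using assms int_uv inverse_mono by (intro integral_le) auto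
  then show "(v - u) / A u \<le> travel_time v - travel_time u"
    using diff assms by simp
  have "integral {u..v} (\<lambda>s. 1 / A s) \<le> integral {u..v} (\<lambda>_. 1 / A v)"
    using assms int_uv inverse_mono by (intro integral_le) auto
  then show "travel_time v - travel_time u \<le> (v - u) / A v"
    using diff assms by simp
qed

lemma travel_time_has_real_derivative:
  assumes "c < x"
  shows "(travel_time has_real_derivative 1 / A x) (at x)"
proof -
  have "(travel_time has_real_derivative 1 / A x) (at x within {c..x + 1})"
    unfolding travel_time_def using assms
    by (intro integral_has_real_derivative continuous_on_subset[OF continuous_on_inverse]) auto
  moreover have "at x within {c..x + 1} = at x"
    using assms by (intro at_within_Icc_at) auto
  ultimately show ?thesis
    by simp
qed

lemma travel_time_pos:
  assumes "c < x"
  shows "travel_time x > 0"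
proof -
  have "0 < (x - c) / A c"
    using assms pos[of c] by simp
  also have "\<dots> \<le> travel_time x"
    using travel_time_diff_bounds(1)[of c x] assms by (simp add: travel_time_def)
  finally show ?thesis .
qed

lemma travel_time_le: "c \<le> x \<Longrightarrow> travel_time x \<le> x / A x"
  using travel_time_diff_bounds(2)[of c x] divide_right_mono[of "x - c" x "A x"] pos[of x] c_pos
  by (simp add: travel_time_def)

lemma travel_time_div_mono:
  assumes "c < x" and "x \<le> y"
  shows "travel_time x / x \<le> travel_time y / y"
proof -
  have "(y - x) * travel_time x \<le> (y - x) * (x / A x)"
    using assms travel_time_le[of x] by (intro mult_left_mono) auto
  also have "\<dots> = x * ((y - x) / A x)"
    by simp
  also have "\<dots> \<le> x * (travel_time y - travel_time x)"
    using assms c_pos travel_time_diff_bounds(1)[of x y] by (intro mult_left_mono) auto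
  finally have "y * travel_time x \<le> x * travel_time y"
    by (simp add: algebra_simps)
  then show ?thesis
    using assms c_pos by (simp add: field_simps)
qed

lemma abs_ratio_minus_1_le:
  assumes "c < x" and "c < y"
  shows "\<bar>y / x - 1\<bar> \<le> \<bar>travel_time y / travel_time x - 1\<bar>"
proof -
  have x: "x > 0" "travel_time x > 0" and y: "y > 0" "travel_time y > 0"
    using assms c_pos travel_time_pos by auto
  show ?thesis
  proof (cases "x \<le> y")
    case True
    then have "travel_time x * y \<le> travel_time y * x"
      using travel_time_div_mono[of x y] assms x y by (simp add: field_simps)
    then have "1 \<le> y / x" "y / x \<le> travel_time y / travel_time x"
      using True x y by (simp_all add: field_simps)
    then show ?thesis
      by simp
  next
    case False
    then have "travel_time y * x \<le> travel_time x * y"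
      using travel_time_div_mono[of y x] assms x y by (simp add: field_simps)
    then have "y / x \<le> 1" "travel_time y / travel_time x \<le> y / x"
      using False x y by (simp_all add: field_simps)
    then show ?thesis
      by simp
  qed
qed

lemma tendsto_ratio_1_if_travel_times_equiv:
  assumes u: "filterlim u at_top F" and v: "filterlim v at_top F"
    and u_time: "((\<lambda>t. travel_time (u t) / w t) \<longlongrightarrow> 1) F"
    and v_time: "((\<lambda>t. travel_time (v t) / w t) \<longlongrightarrow> 1) F"
  shows "((\<lambda>t. u t / v t) \<longlongrightarrow> 1) F"
proof -
  have "eventually (\<lambda>t. travel_time (v t) / w t \<noteq> 0) F"
    using v_time by (rule tendsto_imp_eventually_ne) simp
  then have "eventually (\<lambda>t. travel_time (u t) / w t / (travel_time (v t) / w t)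
      = travel_time (u t) / travel_time (v t)) F"
    by eventually_elim simp
  with tendsto_divide[OF u_time v_time]
  have time_ratio: "((\<lambda>t. travel_time (u t) / travel_time (v t)) \<longlongrightarrow> 1) F"
    by (simp add: Lim_transform_eventually)
  have "((\<lambda>t. u t / v t - 1) \<longlongrightarrow> 0) F"
  proof (rule Lim_null_comparison)
    have "eventually (\<lambda>t. c < u t \<and> c < v t) F"
      using u v by (auto simp: filterlim_at_top_dense intro: eventually_conj)
    then show "eventually (\<lambda>t. norm (u t / v t - 1) \<le> \<bar>travel_time (u t) / travel_time (v t) - 1\<bar>) F"
      by eventually_elim (simp add: abs_ratio_minus_1_le)
    show "((\<lambda>t. \<bar>travel_time (u t) / travel_time (v t) - 1\<bar>) \<longlongrightarrow> 0) F"
      using tendsto_rabs_zero[OF LIM_zero[OF time_ratio]] .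
  qed
  then show ?thesis
    by (simp add: LIM_zero_iff)
qed

lemma travel_time_along_solution:
  assumes deriv: "\<And>t. t \<ge> T \<Longrightarrow> (f has_real_derivative A (f t)) (at t)"
    and above: "\<And>t. t \<ge> T \<Longrightarrow> f t > c" and "t \<ge> T"
  shows "travel_time (f t) = t - T + travel_time (f T)"
proof -
  define H where "H t = travel_time (f t) - t" for t
  have H': "(H has_real_derivative 0) (at s)" if "s \<ge> T" for s
  proof -
    have "((\<lambda>t. travel_time (f t)) has_real_derivative 1 / A (f s) * A (f s)) (at s)"
      using that above by (intro DERIV_chain2[OF travel_time_has_real_derivative deriv]) auto
    then have "(H has_real_derivative 1 / A (f s) * A (f s) - 1) (at s)"
      unfolding H_def by (intro DERIV_diff DERIV_ident)
    then show ?thesis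
      using pos[of "f s"] above[OF that] by simp
  qed
  have "H t = H T"
  proof (cases "t = T")
    case False
    then have "T < t"
      using \<open>t \<ge> T\<close> by simp
    then show ?thesis
      using H' by (intro DERIV_isconst2[of T t] DERIV_atLeastAtMost_imp_continuous_on) auto
  qed simp
  then show ?thesis
    by (simp add: H_def)
qed

lemma travel_time_step_bounds:
  assumes "c \<le> x"
  shows "1 \<le> travel_time (x + A x) - travel_time x"
    and "travel_time (x + A x) - travel_time x \<le> A x / A (x + A x)"
  using travel_time_diff_bounds[of x "x + A x"] assms pos[of x] by auto

end

lemma recurrence_filterlim_at_top:
  fixes A :: "real \<Rightarrow> real" and b :: "nat \<Rightarrow> real"
  assumes cont: "continuous_on {0<..} A" and pos: "\<And>x. x > 0 \<Longrightarrow> A x > 0"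
    and "b 0 > 0" and rec: "\<And>n. b (Suc n) = b n + A (b n)"
  shows "filterlim b at_top sequentially"
proof -
  have b_pos: "b n > 0" for n
    by (induction n) (use \<open>b 0 > 0\<close> rec pos in \<open>auto intro: add_pos_pos\<close>)
  have inc: "incseq b"
    using rec pos b_pos by (intro incseq_SucI) (simp add: less_imp_le)
  show ?thesis
    unfolding filterlim_at_top
  proof
    fix M
    show "eventually (\<lambda>n. M \<le> b n) sequentially"
    proof (rule ccontr)
      assume "\<not> eventually (\<lambda>n. M \<le> b n) sequentially"
      then have "\<forall>n. b n \<le> M"
        using inc unfolding eventually_sequentially incseq_def by (meson nle_le order.trans)
      then obtain L where lim: "b \<longlonglongrightarrow> L" and le: "\<forall>n. b n \<le> L"
        using incseq_convergent[OF inc] by blast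
      have "L > 0"
        using le b_pos[of 0] by (metis order.strict_trans2)
      have "(\<lambda>n. A (b n)) \<longlonglongrightarrow> A L"
        using b_pos \<open>L > 0\<close> by (intro continuous_on_tendsto_compose[OF cont lim]) auto
      moreover have "(\<lambda>n. A (b n)) \<longlonglongrightarrow> L - L"
        using tendsto_diff[OF LIMSEQ_Suc[OF lim] lim] by (simp add: rec)
      ultimately have "A L = 0"
        using LIMSEQ_unique by force
      with pos \<open>L > 0\<close> show False
        by force
    qed
  qed
qed

lemma ode_solution_mono:
  fixes A f :: "real \<Rightarrow> real"
  assumes deriv: "\<And>t. t \<ge> T \<Longrightarrow> (f has_real_derivative A (f t)) (at t)"
    and pos: "\<And>t. t \<ge> T \<Longrightarrow> A (f t) > 0" and "T \<le> s" and "s \<le> t"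
  shows "f s \<le> f t"
proof (cases "s = t")
  case False
  then have "f s < f t"
    using assms by (intro DERIV_pos_imp_increasing[of s t f]) (auto, meson order.trans)
  then show ?thesis
    by simp
qed simp

text \<open>Below a bound \<open>M\<close>, the speed \<open>A (f t)\<close> stays above the minimum of \<open>A\<close> on \<open>[f T, M]\<close>.\<close>
lemma ode_solution_unbounded:
  fixes A f :: "real \<Rightarrow> real"
  assumes cont: "continuous_on {0<..} A" and pos: "\<And>x. x > 0 \<Longrightarrow> A x > 0"
    and deriv: "\<And>t. t \<ge> T \<Longrightarrow> (f has_real_derivative A (f t)) (at t)"
    and f_pos: "\<And>t. t \<ge> T \<Longrightarrow> f t > 0"
  shows "\<exists>t\<ge>T. f t > M"
proof (rule ccontr)
  assume "\<not> (\<exists>t\<ge>T. f t > M)"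
  then have bound: "\<And>t. t \<ge> T \<Longrightarrow> f t \<le> M"
    by auto
  have Af_pos: "\<And>t. t \<ge> T \<Longrightarrow> A (f t) > 0"
    using pos f_pos by blast
  have fT: "0 < f T" "f T \<le> M"
    using bound f_pos by auto
  obtain x where x: "x \<in> {f T..M}" and min: "\<And>y. y \<in> {f T..M} \<Longrightarrow> A x \<le> A y"
  proof -
    have "continuous_on {f T..M} A"
      using fT by (auto intro: continuous_on_subset[OF cont])
    then show ?thesis
      using continuous_attains_inf[of "{f T..M}" A] fT that by auto
  qed
  have m: "A x > 0"
    using x fT pos by auto
  define t where "t = T + (M - f T) / A x + 1"
  have "T < t"
    using fT m by (simp add: t_def add_nonneg_pos)
  then obtain z where z: "T < z" "z < t" and mvt: "f t - f T = (t - T) * A (f z)"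
    using MVT2[of T t f "\<lambda>s. A (f s)"] deriv by auto
  have "f T \<le> f z"
    using z by (intro ode_solution_mono[OF deriv Af_pos]) auto
  then have "A x \<le> A (f z)"
    using bound[of z] z by (intro min) auto
  then have "(t - T) * A x \<le> f t - f T"
    using mvt \<open>T < t\<close> by simp
  moreover have "(t - T) * A x = M - f T + A x"
    using m by (simp add: t_def field_simps)
  ultimately show False
    using bound[of t] \<open>T < t\<close> m by simp
qed

lemma ode_solution_filterlim_at_top:
  fixes A f :: "real \<Rightarrow> real"
  assumes cont: "continuous_on {0<..} A" and pos: "\<And>x. x > 0 \<Longrightarrow> A x > 0"
    and deriv: "\<And>t. t \<ge> T \<Longrightarrow> (f has_real_derivative A (f t)) (at t)"
    and f_pos: "\<And>t. t \<ge> T \<Longrightarrow> f t > 0"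
  shows "filterlim f at_top at_top"
  unfolding filterlim_at_top eventually_at_top_linorder
proof
  fix M
  obtain t where "t \<ge> T" "f t > M"
    using ode_solution_unbounded[OF cont pos deriv f_pos] by blast
  moreover have "f t \<le> f s" if "s \<ge> t" for s
    using pos f_pos \<open>t \<ge> T\<close> that by (intro ode_solution_mono[OF deriv]) auto
  ultimately have "\<forall>s\<ge>t. M \<le> f s"
    by force
  then show "\<exists>t. \<forall>s\<ge>t. M \<le> f s" ..
qed

context positive_antimono_rate
begin

lemma travel_time_recurrence_over_n:
  assumes step: "((\<lambda>x. A (x + A x) / A x) \<longlongrightarrow> 1) at_top"
    and lim: "filterlim a at_top sequentially"
    and rec: "eventually (\<lambda>n. a (Suc n) = a n + A (a n)) sequentially"
  shows "(\<lambda>n. travel_time (a n) / real n) \<longlonglongrightarrow> 1"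
proof (rule LIMSEQ_over_n_if_differences_LIMSEQ, rule real_tendsto_sandwich)
  have above: "eventually (\<lambda>n. c \<le> a n) sequentially"
    using lim by (simp add: filterlim_at_top)
  show "eventually (\<lambda>n. 1 \<le> travel_time (a (Suc n)) - travel_time (a n)) sequentially"
    using above rec by eventually_elim (simp add: travel_time_step_bounds)
  show "eventually (\<lambda>n. travel_time (a (Suc n)) - travel_time (a n)
      \<le> 1 / (A (a n + A (a n)) / A (a n))) sequentially"
    using above rec by eventually_elim (simp add: travel_time_step_bounds)
  show "(\<lambda>n. 1 / (A (a n + A (a n)) / A (a n))) \<longlonglongrightarrow> 1"
    using tendsto_divide[OF tendsto_const filterlim_compose[OF step lim], of 1] by simp
qed (rule tendsto_const)

lemma travel_time_solution_over_n:
  assumes deriv: "\<And>t. t \<ge> T \<Longrightarrow> (f has_real_derivative A (f t)) (at t)"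
    and lim: "filterlim f at_top at_top"
  shows "(\<lambda>n. travel_time (f (real n)) / real n) \<longlonglongrightarrow> 1"
proof -
  obtain N where "\<And>t. t \<ge> N \<Longrightarrow> f t > c"
    using lim by (auto simp: filterlim_at_top_dense eventually_at_top_linorder)
  then obtain T1 where T1: "T1 \<ge> T" "\<And>t. t \<ge> T1 \<Longrightarrow> f t > c"
    by (meson max.boundedE max.cobounded1)
  define K where "K = travel_time (f T1) - T1"
  have "eventually (\<lambda>n. 1 + K / real n = travel_time (f (real n)) / real n) sequentially"
    using eventually_ge_at_top[of "nat \<lceil>T1\<rceil>"] eventually_gt_at_top[of 0]
  proof eventually_elim
    case (elim n)
    then have "real n \<ge> T1"
      by linarith
    then have "travel_time (f (real n)) = real n + K"
      using travel_time_along_solution[of T1 f "real n"] T1 deriv by (simp add: K_def)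
    then show ?case
      using elim by (simp add: field_simps)
  qed
  moreover have "(\<lambda>n. 1 + K / real n) \<longlonglongrightarrow> 1"
    using tendsto_add[OF tendsto_const lim_const_over_n, of 1 K] by simp
  ultimately show ?thesis
    by (rule Lim_transform_eventually[rotated])
qed

end

theorem lemma3:
  fixes A f :: "real \<Rightarrow> real" and a :: "nat \<Rightarrow> real"
  assumes A_cont: "continuous_on {0<..} A"
    and A_pos: "\<And>x. x > 0 \<Longrightarrow> A x > 0"
    and A_lim: "(A \<longlongrightarrow> 0) at_top"
    and A_tail: "\<exists>x0>0. convex_on {x0<..} A \<and> (\<forall>x>x0. A differentiable (at x))"
    and a_pos: "\<And>t. t \<ge> 1 \<Longrightarrow> a t > 0"
    and a_rec: "\<And>t. t \<ge> 1 \<Longrightarrow> a (t + 1) = a t + A (a t)"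
    and f_pos: "\<And>t. t > 0 \<Longrightarrow> f t > 0"
    and f_deriv: "\<forall>\<^sub>F t in at_top. (f has_real_derivative A (f t)) (at t)"
  shows "(\<lambda>t. f (real t) / a t) \<longlonglongrightarrow> 1"
proof -
  obtain x0 where "x0 > 0" and convex: "convex_on {x0<..} A"
    using A_tail by blast
  have antimono: "A y \<le> A x" if "x0 < x" "x \<le> y" for x y
    using \<open>x0 > 0\<close> A_pos by (intro convex_on_tendsto_0_antimono[OF convex A_lim _ that])
      (simp add: less_imp_le)
  interpret positive_antimono_rate A "x0 + 1"
    using \<open>x0 > 0\<close> A_pos antimono by unfold_locales (auto intro: continuous_on_subset[OF A_cont])
  have a_lim: "filterlim a at_top sequentially"
    using recurrence_filterlim_at_top[OF A_cont A_pos, of "\<lambda>n. a (Suc n)"] a_pos a_rec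
    by (simp add: filterlim_sequentially_Suc)
  obtain T where "T \<ge> 1" and deriv: "\<And>t. t \<ge> T \<Longrightarrow> (f has_real_derivative A (f t)) (at t)"
    using f_deriv unfolding eventually_at_top_linorder by (metis max.cobounded2 max.boundedE)
  then have f_lim: "filterlim f at_top at_top"
    using ode_solution_filterlim_at_top[OF A_cont A_pos deriv] f_pos by force
  have "eventually (\<lambda>n. a (Suc n) = a n + A (a n)) sequentially"
    using a_rec by (auto simp: eventually_sequentially intro: exI[of _ 1])
  then have a_time: "(\<lambda>n. travel_time (a n) / real n) \<longlonglongrightarrow> 1"
    using convex_on_step_ratio_tendsto_1[OF convex A_lim] A_pos \<open>x0 > 0\<close>
    by (intro travel_time_recurrence_over_n[OF _ a_lim]) auto
  show ?thesis
    using filterlim_compose[OF f_lim filterlim_real_sequentially] a_lim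
      travel_time_solution_over_n[OF deriv f_lim] a_time
    by (rule tendsto_ratio_1_if_travel_times_equiv)
qed

end
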